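(* There is a constant $C > 0$ such that for any $n \ge 2$ and any $p \in \mathcal{P}_n$, $$\max_{|\theta| \le n^{-2/5}} |p(e^{i \theta})| \ge \exp(-Cn^{1/5}\log^5 n).$$
   Context: $\mathcal{P}_n$ is the set of all polynomials $p(z) = 1-\sigma z^d+\sum_{j = n^{1/5}}^n c_j z^j \in \mathbb{C}[z]$ with $1 \le d < n^{1/5}$ an integer, $\sigma \in \{0,1\}$, and complex coefficients satisfying $|c_j| \le 1$ for each $j$ (the sum runs over integers $j$ with $n^{1/5} \le j \le n$; floor functions are omitted). $\log$ is the natural logarithm. *)

theory Defs
  imports "HOL-Analysis.Analysis" "HOL-Computational_Algebra.Polynomial"
begin

definition Pn :: "nat \<Rightarrow> complex poly set" where
  "Pn n = {p. \<exists>(d::nat) (\<sigma>::nat) (c::nat \<Rightarrow> complex).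
      1 \<le> d \<and> real d < real n powr (1/5) \<and> \<sigma> \<in> {0, 1} \<and>
      (\<forall>j. cmod (c j) \<le> 1) \<and>
      p = 1 - monom (of_nat \<sigma>) d
            + (\<Sum>j\<in>{j. real n powr (1/5) \<le> real j \<and> j \<le> n}. monom (c j) j)}"

end

theory Submission
  imports Defs "HOL-Complex_Analysis.Complex_Analysis"
begin

(* Let r = 1 - \<epsilon> with \<epsilon> about 3 log n / n^(1/5). At r the part 1 - \<sigma> r^d is at least \<epsilon>,
   while the tail over j \<ge> n^(1/5) is at most (n + 1) r^(n^(1/5)) \<le> \<epsilon>/2, so |p(r)| \<ge> \<epsilon>/2.
   The Moebius map \<phi>(z) = (z + r)/(1 + r z) preserves the unit circle and maps the arc
   |arg z| \<le> pi/N into the arc |\<theta>| \<le> h = n^(-2/5) once N h \<ge> 3 pi \<epsilon>. For the product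
   f(z) = prod_{k<N} p(\<phi>(\<omega>^k z)), \<omega> = e^(2 pi i/N), every point of the unit circle has one factor
   bounded by M = max_{|\<theta>| \<le> h} |p(e^(i\<theta>))| and all others by n + 3, so the maximum modulus
   principle gives |p(r)|^N = |f(0)| \<le> M (n + 3)^(N - 1). As N = O(n^(1/5) log n), this yields
   M \<ge> (\<epsilon> / (2 (n + 3)))^N \<ge> exp(-C n^(1/5) log^5 n). *)

section \<open>Arcs of the unit circle\<close>

lemma one_minus_cos_le: "1 - cos (x::real) \<le> x\<^sup>2 / 2"
proof -
  have "\<bar>sin (x / 2)\<bar> \<le> \<bar>x / 2\<bar>"
    by (rule abs_sin_x_le_abs_x)
  then have "(sin (x / 2))\<^sup>2 \<le> (x / 2)\<^sup>2"
    by (metis abs_le_square_iff)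
  then show ?thesis
    using cos_double_sin[of "x / 2"] by (simp add: power_divide)
qed

lemma one_minus_cos_ge:
  fixes x :: real
  assumes "0 \<le> x" "x \<le> 1"
  shows "x\<^sup>2 / 8 \<le> 1 - cos x"
proof -
  define y where "y = x / 2"
  have y: "0 \<le> y" "y \<le> 1/2"
    using assms unfolding y_def by auto
  have "\<bar>sin y - (\<Sum>m<3. sin_coeff m * y ^ m)\<bar> \<le> inverse (fact 3) * \<bar>y\<bar> ^ 3"
    by (rule Maclaurin_sin_bound)
  moreover have "(\<Sum>m<3. sin_coeff m * y ^ m) = y"
    by (simp add: eval_nat_numeral sin_coeff_def)
  moreover have "y ^ 3 \<le> 3 * y"
  proof -
    have "y * y \<le> 1"
      using y mult_le_one[of y y] by simp
    then have "y * (y * y) \<le> y"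
      using y(1) mult_left_le by blast
    then show ?thesis
      using y(1) by (simp add: power3_eq_cube mult.assoc)
  qed
  ultimately have "y / 2 \<le> sin y"
    using y by (simp add: eval_nat_numeral abs_if split: if_splits)
  then have "(y / 2)\<^sup>2 \<le> (sin y)\<^sup>2"
    using y by (intro power_mono) auto
  then show ?thesis
    using cos_double_sin[of y] unfolding y_def by (simp add: power_divide)
qed

lemma unit_circle_arc_point:
  fixes u :: complex and h :: real
  assumes "norm u = 1" "cos h \<le> Re u" "0 \<le> h" "h \<le> pi"
  shows "\<exists>\<theta>. \<bar>\<theta>\<bar> \<le> h \<and> u = exp (\<i> * of_real \<theta>)"
proof (intro exI conjI)
  have "u \<noteq> 0"
    using assms(1) by auto
  then have "cos h \<le> cos \<bar>Arg u\<bar>"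
    using cos_Arg[of u] assms by simp
  then show "\<bar>Arg u\<bar> \<le> h"
    using cos_mono_le_eq[of h "\<bar>Arg u\<bar>"] Arg_bounded[of u] assms by auto
  show "u = exp (\<i> * of_real (Arg u))"
    using complex_norm_eq_1_exp_eq assms(1) by simp
qed

lemma rotation_into_arc:
  fixes w :: complex and N :: nat
  assumes N: "N \<ge> 1" and w: "norm w = 1"
  shows "\<exists>k<N. cos (pi / N) \<le> Re (exp (\<i> * of_real (2 * pi * k / N)) * w)"
proof -
  define t where "t = Arg w"
  define j where "j = round (- t * N / (2 * pi))"
  define k where "k = nat (j mod N)"
  have kN: "k < N"
    using N unfolding k_def by (simp add: nat_less_iff)
  have j_close: "\<bar>2 * pi * j / N + t\<bar> \<le> pi / N"
  proof -
    have "\<bar>of_int j - (- t * N / (2 * pi))\<bar> \<le> 1/2"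
      unfolding j_def by (rule of_int_round_abs_le)
    then have "\<bar>(2 * pi * j + t * N) / (2 * pi)\<bar> \<le> 1/2"
      by (simp add: field_simps)
    then have "\<bar>2 * pi * j + t * N\<bar> \<le> pi"
      by (simp add: abs_divide divide_le_eq)
    then show ?thesis
      using N by (simp add: field_simps abs_divide abs_mult)
  qed
  have "exp (\<i> * of_real (2 * pi * k / N)) = exp (\<i> * of_real (2 * pi * j / N))"
  proof -
    have "int k = j - int N * (j div N)"
      using N unfolding k_def by (simp add: minus_mult_div_eq_mod)
    then have k_eq: "real k = of_int j - real N * of_int (j div N)"
      by (metis of_int_diff of_int_mult of_int_of_nat_eq)
    have "2 * pi * k / N = 2 * pi * j / N + of_int (- (j div N)) * (pi * 2)"
      using N unfolding k_eq by (simp add: field_simps)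
    then show ?thesis
      by (simp only: of_real_add distrib_left of_real_mult of_real_of_int_eq of_real_numeral
          exp_plus_2pin)
  qed
  also have "\<dots> * w = exp (\<i> * of_real (2 * pi * j / N + t))"
    using complex_norm_eq_1_exp_eq[of w] w unfolding t_def by (simp add: exp_add distrib_left)
  finally have "Re (exp (\<i> * of_real (2 * pi * k / N)) * w) = cos \<bar>2 * pi * j / N + t\<bar>"
    by (simp add: Re_exp)
  moreover have "cos (pi / N) \<le> cos \<bar>2 * pi * j / N + t\<bar>"
    using j_close N by (intro cos_monotone_0_pi_le) (auto simp: field_simps)
  ultimately show ?thesis
    using kN by auto
qed

section \<open>A Moebius map of the unit disc\<close>

lemma moebius_denom_nonzero:
  fixes r :: real and z :: complex
  assumes "0 \<le> r" "r < 1" "norm z \<le> 1"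
  shows "1 + of_real r * z \<noteq> 0"
proof
  assume "1 + of_real r * z = 0"
  then have "norm (of_real r * z) = 1"
    by (metis add.commute add_eq_0_iff norm_minus_cancel norm_one)
  moreover have "norm (of_real r * z) \<le> r"
    using assms by (simp add: norm_mult mult_left_le)
  ultimately show False
    using assms by simp
qed

lemma norm_moebius_unit:
  fixes r :: real and v :: complex
  assumes "0 \<le> r" "r < 1" "norm v = 1"
  shows "norm ((v + of_real r) / (1 + of_real r * v)) = 1"
proof -
  have "1 + of_real r * v = v * cnj (v + of_real r)"
    using assms(3) by (simp add: algebra_simps complex_norm_square[symmetric])
  then have "norm (1 + of_real r * v) = norm v * norm (cnj (v + of_real r))"
    by (simp only: norm_mult)
  then have "norm (1 + of_real r * v) = norm (v + of_real r)"
    using assms(3) by (simp only: complex_mod_cnj mult_1)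
  moreover have "1 + of_real r * v \<noteq> 0"
    using moebius_denom_nonzero assms by simp
  ultimately show ?thesis
    by (metis norm_divide norm_eq_zero divide_self)
qed

lemma Re_moebius_unit:
  fixes r :: real and v :: complex
  assumes "norm v = 1"
  shows "Re ((v + of_real r) / (1 + of_real r * v)) = ((1 + r\<^sup>2) * Re v + 2 * r) / (1 + 2 * r * Re v + r\<^sup>2)"
proof -
  have unit: "(Re v)\<^sup>2 + (Im v)\<^sup>2 = 1"
    using assms by (metis cmod_power2 power_one)
  have "Re ((v + of_real r) / (1 + of_real r * v)) =
      ((Re v + r) * (1 + r * Re v) + Im v * (r * Im v)) / ((1 + r * Re v)\<^sup>2 + (r * Im v)\<^sup>2)"
    by (simp add: Re_divide)
  also have "(Re v + r) * (1 + r * Re v) + Im v * (r * Im v) = (1 + r\<^sup>2) * Re v + 2 * r"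
    using unit by algebra
  also have "(1 + r * Re v)\<^sup>2 + (r * Im v)\<^sup>2 = 1 + 2 * r * Re v + r\<^sup>2"
    using unit by algebra
  finally show ?thesis .
qed

lemma Re_moebius_ge:
  fixes r c \<delta> :: real and v :: complex
  assumes "0 \<le> r" "r < 1" "norm v = 1" "1 - \<delta> \<le> Re v" "c \<le> 1"
    and "\<delta> * ((1 - r)\<^sup>2 + 2 * r * (1 - c)) \<le> (1 - c) * (1 + r)\<^sup>2"
  shows "c \<le> Re ((v + of_real r) / (1 + of_real r * v))"
proof -
  have "- 1 \<le> Re v"
    using abs_Re_le_cmod[of v] assms(3) by linarith
  then have "- r \<le> r * Re v"
    using assms(1) mult_left_mono[of "-1" "Re v" r] by simp
  moreover have "0 < (1 - r)\<^sup>2"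
    using assms(2) by simp
  moreover have "(1 - r)\<^sup>2 = 1 - 2 * r + r\<^sup>2"
    by (simp add: power2_diff)
  ultimately have denom_pos: "0 < 1 + 2 * r * Re v + r\<^sup>2"
    by linarith
  have "(1 - \<delta>) * ((1 - r)\<^sup>2 + 2 * r * (1 - c)) \<le> Re v * ((1 - r)\<^sup>2 + 2 * r * (1 - c))"
    using assms by (intro mult_right_mono) auto
  then have "c * (1 + 2 * r * Re v + r\<^sup>2) \<le> (1 + r\<^sup>2) * Re v + 2 * r"
    using assms(6) by (simp add: algebra_simps power2_eq_square)
  then show ?thesis
    using denom_pos by (simp add: Re_moebius_unit[OF assms(3)] pos_le_divide_eq)
qed

(* Near 1 the map contracts arcs by a factor of about \<epsilon>/2, so the arc of half-width pi/N
   lands inside the arc of half-width h as soon as N h is a few times pi \<epsilon>. *)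
lemma Re_moebius_ge_cos:
  fixes h \<epsilon> :: real and N :: nat and v :: complex
  assumes h: "0 < h" "h \<le> \<epsilon>" "\<epsilon> \<le> 1" and N: "N \<ge> 1" "3 * pi * \<epsilon> \<le> N * h"
    and v: "norm v = 1" "cos (pi / N) \<le> Re v"
  shows "cos h \<le> Re ((v + of_real (1 - \<epsilon>)) / (1 + of_real (1 - \<epsilon>) * v))"
proof (rule Re_moebius_ge[where \<delta> = "1 - cos (pi / N)"])
  define \<gamma> where "\<gamma> = 1 - cos h"
  have \<gamma>: "h\<^sup>2 / 8 \<le> \<gamma>" "\<gamma> \<le> h\<^sup>2 / 2"
    unfolding \<gamma>_def using one_minus_cos_ge[of h] one_minus_cos_le[of h] h by auto
  have "(1 - (1 - \<epsilon>))\<^sup>2 + 2 * (1 - \<epsilon>) * \<gamma> \<le> \<epsilon>\<^sup>2 + 2 * 1 * (h\<^sup>2 / 2)"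
    using h \<gamma> by (intro add_mono mult_mono) auto
  also have "\<dots> \<le> 2 * \<epsilon>\<^sup>2"
    using h power_mono[of h \<epsilon> 2] by simp
  finally have B: "(1 - (1 - \<epsilon>))\<^sup>2 + 2 * (1 - \<epsilon>) * \<gamma> \<le> 2 * \<epsilon>\<^sup>2" .
  have "pi * \<epsilon> / N \<le> h / 3"
    using N by (simp add: field_simps)
  then have small: "(pi * \<epsilon> / N)\<^sup>2 \<le> (h / 3)\<^sup>2"
    using h by (intro power_mono) auto
  have "(1 - cos (pi / N)) * ((1 - (1 - \<epsilon>))\<^sup>2 + 2 * (1 - \<epsilon>) * \<gamma>) \<le> ((pi / N)\<^sup>2 / 2) * (2 * \<epsilon>\<^sup>2)"
    using B h \<gamma> by (intro mult_mono one_minus_cos_le) (auto intro: add_nonneg_nonneg)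
  also have "\<dots> = (pi * \<epsilon> / N)\<^sup>2"
    by (simp add: power_divide power_mult_distrib)
  also have "\<dots> \<le> \<gamma>"
    using small \<gamma> by (simp add: power_divide)
  also have "\<dots> \<le> \<gamma> * (1 + (1 - \<epsilon>))\<^sup>2"
    using h \<gamma> by (intro mult_le_cancel_left1[THEN iffD2]) (auto simp: one_le_power)
  finally show "(1 - cos (pi / N)) * ((1 - (1 - \<epsilon>))\<^sup>2 + 2 * (1 - \<epsilon>) * (1 - cos h))
      \<le> (1 - cos h) * (1 + (1 - \<epsilon>))\<^sup>2"
    unfolding \<gamma>_def by (simp add: mult.commute)
qed (use h v in auto)

section \<open>Maximum modulus over rotated arcs\<close>

lemma prod_le_small_factor_power:
  fixes f :: "'a \<Rightarrow> real"
  assumes "finite A" "a \<in> A" "\<And>x. x \<in> A \<Longrightarrow> 0 \<le> f x \<and> f x \<le> P" "f a \<le> E" "1 \<le> P"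
  shows "prod f A \<le> E * P ^ (card A - 1)"
proof -
  have "prod f A = f a * prod f (A - {a})"
    using assms(1,2) by (rule prod.remove)
  also have "\<dots> \<le> E * P ^ (card A - 1)"
    using assms by (intro mult_mono prod_le_power prod_nonneg) (auto intro: order_trans)
  finally show ?thesis .
qed

lemma norm_poly_pow_le_by_rotations:
  fixes p :: "complex poly" and r h E P :: real and N :: nat
  assumes r: "0 \<le> r" "r < 1" and N: "N \<ge> 1" and h: "0 \<le> h" "h \<le> pi"
    and arc: "\<And>v. norm v = 1 \<Longrightarrow> cos (pi / N) \<le> Re v \<Longrightarrow>
        cos h \<le> Re ((v + of_real r) / (1 + of_real r * v))"
    and P: "\<And>u. norm u = 1 \<Longrightarrow> norm (poly p u) \<le> P" "1 \<le> P"
    and E: "\<And>\<theta>. \<bar>\<theta>\<bar> \<le> h \<Longrightarrow> norm (poly p (exp (\<i> * of_real \<theta>))) \<le> E"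
  shows "norm (poly p (of_real r)) ^ N \<le> E * P ^ (N - 1)"
proof -
  define \<phi> where "\<phi> k w = (w * exp (\<i> * of_real (2 * pi * k / N)) + of_real r) /
      (1 + of_real r * (w * exp (\<i> * of_real (2 * pi * k / N))))" for k :: nat and w
  define f where "f w = (\<Prod>k<N. poly p (\<phi> k w))" for w
  have hol: "f holomorphic_on cball 0 1"
    unfolding f_def \<phi>_def
  proof (intro holomorphic_intros)
    fix k w assume "w \<in> cball (0::complex) 1"
    then show "1 + of_real r * (w * exp (\<i> * of_real (2 * pi * k / N))) \<noteq> 0"
      by (intro moebius_denom_nonzero r) (simp add: norm_mult)
  qed
  have "norm (f 0) \<le> E * P ^ (N - 1)"
  proof (rule maximum_modulus_frontier[of f "ball 0 1"])
    show "f holomorphic_on interior (ball 0 1)"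
      using hol by (rule holomorphic_on_subset) auto
    show "continuous_on (closure (ball 0 1)) f"
      using holomorphic_on_imp_continuous_on[OF hol] by simp
    fix z :: complex assume "z \<in> frontier (ball 0 1)"
    then have z: "norm z = 1"
      by simp
    then have unit: "norm (\<phi> k z) = 1" for k
      unfolding \<phi>_def by (intro norm_moebius_unit r) (simp add: norm_mult)
    obtain k0 where k0: "k0 < N" "cos (pi / N) \<le> Re (z * exp (\<i> * of_real (2 * pi * k0 / N)))"
      using rotation_into_arc[OF N z] by (auto simp: mult.commute)
    have "cos h \<le> Re (\<phi> k0 z)"
      using arc[OF _ k0(2)] z unfolding \<phi>_def by (simp add: norm_mult)
    then obtain \<theta> where "\<bar>\<theta>\<bar> \<le> h" "\<phi> k0 z = exp (\<i> * of_real \<theta>)"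
      using unit_circle_arc_point[OF unit _ h] by blast
    then have "norm (poly p (\<phi> k0 z)) \<le> E"
      using E by simp
    then have "(\<Prod>k<N. norm (poly p (\<phi> k z))) \<le> E * P ^ (card {..<N} - 1)"
      using k0(1) P unit by (intro prod_le_small_factor_power) auto
    then show "norm (f z) \<le> E * P ^ (N - 1)"
      unfolding f_def by (simp add: prod_norm)
  qed auto
  moreover have "f 0 = poly p (of_real r) ^ N"
    unfolding f_def \<phi>_def by simp
  ultimately show ?thesis
    by (simp add: norm_power)
qed

lemma norm_poly_arc_lower_bound:
  fixes p :: "complex poly" and P h \<epsilon> :: real and N :: nat
  assumes P: "\<And>u. norm u = 1 \<Longrightarrow> norm (poly p u) \<le> P" "1 < P"
    and h: "0 < h" "h \<le> \<epsilon>" "\<epsilon> \<le> 1" and N: "N \<ge> 1" "3 * pi * \<epsilon> \<le> N * h"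
  shows "\<exists>\<theta>. \<bar>\<theta>\<bar> \<le> h \<and>
    (norm (poly p (of_real (1 - \<epsilon>))) / P) ^ N \<le> norm (poly p (exp (\<i> * of_real \<theta>)))"
proof (rule ccontr)
  let ?a = "norm (poly p (of_real (1 - \<epsilon>)))"
  assume neg: "\<not> ?thesis"
  then have E: "norm (poly p (exp (\<i> * of_real \<theta>))) \<le> (?a / P) ^ N" if "\<bar>\<theta>\<bar> \<le> h" for \<theta>
    using that by force
  have "0 < ?a"
  proof (rule ccontr)
    assume "\<not> 0 < ?a"
    then have "(?a / P) ^ N \<le> norm (poly p (exp (\<i> * of_real 0)))"
      using N(1) by (simp add: zero_power)
    then show False
      using neg h(1) by (metis abs_zero less_imp_le)
  qed
  have "?a ^ N \<le> (?a / P) ^ N * P ^ (N - 1)"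
  proof (rule norm_poly_pow_le_by_rotations[OF _ _ N(1) _ _ _ P(1) _ E])
    show "cos h \<le> Re ((v + of_real (1 - \<epsilon>)) / (1 + of_real (1 - \<epsilon>) * v))"
      if "norm v = 1" "cos (pi / N) \<le> Re v" for v
      using Re_moebius_ge_cos[OF h N that] .
  qed (use h P(2) pi_gt3 in auto)
  also have "\<dots> = ?a ^ N / P"
  proof -
    obtain M where "N = Suc M"
      using N(1) by (cases N) auto
    then show ?thesis
      using P(2) by (simp add: power_divide)
  qed
  also have "\<dots> < ?a ^ N"
    using \<open>0 < ?a\<close> P(2) by (simp add: divide_less_eq)
  finally show False
    by simp
qed

lemma PnE:
  assumes "p \<in> Pn n"
  obtains d \<sigma> c where "1 \<le> d" "\<sigma> \<in> {0, 1}" "\<And>j. norm (c j) \<le> 1"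
    "\<And>x. poly p x = 1 - of_nat \<sigma> * x ^ d +
       (\<Sum>j\<in>{j. real n powr (1/5) \<le> real j \<and> j \<le> n}. c j * x ^ j)"
proof -
  obtain d \<sigma> c where "1 \<le> d" "\<sigma> \<in> {0, 1}" "\<forall>j. norm (c j) \<le> 1"
    "p = 1 - monom (of_nat \<sigma>) d + (\<Sum>j\<in>{j. real n powr (1/5) \<le> real j \<and> j \<le> n}. monom (c j) j)"
    using assms unfolding Pn_def by blast
  then show ?thesis
    by (intro that[of d \<sigma> c]) (simp_all add: poly_sum poly_monom)
qed

lemma card_Pn_exponents_le: "card {j. real n powr (1/5) \<le> real j \<and> j \<le> n} \<le> n + 1"
proof -
  have "card {j. real n powr (1/5) \<le> real j \<and> j \<le> n} \<le> card {..n}"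
    by (rule card_mono) auto
  then show ?thesis
    by simp
qed

lemma Pn_norm_poly_le:
  assumes "p \<in> Pn n" "norm u \<le> 1"
  shows "norm (poly p u) \<le> real n + 3"
proof -
  obtain d \<sigma> c where "1 \<le> d" and \<sigma>: "\<sigma> \<in> {0, 1}" and c: "\<And>j. norm (c j) \<le> 1"
    and p: "\<And>x. poly p x = 1 - of_nat \<sigma> * x ^ d +
       (\<Sum>j\<in>{j. real n powr (1/5) \<le> real j \<and> j \<le> n}. c j * x ^ j)"
    using assms(1) by (rule PnE) (rule that)
  have u_pow: "norm (u ^ k) \<le> 1" for k
    using assms(2) by (simp add: norm_power power_le_one)
  have "norm (1 - of_nat \<sigma> * u ^ d :: complex) \<le> 1 + 1"
    using \<sigma> u_pow[of d] norm_triangle_ineq4[of 1 "of_nat \<sigma> * u ^ d"] by auto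
  moreover have "norm (\<Sum>j\<in>{j. real n powr (1/5) \<le> real j \<and> j \<le> n}. c j * u ^ j)
      \<le> card {j. real n powr (1/5) \<le> real j \<and> j \<le> n}"
    using sum_norm_le[of _ "\<lambda>j. c j * u ^ j" "\<lambda>_. 1"] c u_pow
    by (simp add: norm_mult mult_le_one)
  moreover have "real (card {j. real n powr (1/5) \<le> real j \<and> j \<le> n}) \<le> real n + 1"
    using card_Pn_exponents_le[of n] by (metis of_nat_1 of_nat_add of_nat_le_iff)
  moreover have "norm (poly p u) \<le> norm (1 - of_nat \<sigma> * u ^ d :: complex)
      + norm (\<Sum>j\<in>{j. real n powr (1/5) \<le> real j \<and> j \<le> n}. c j * u ^ j)"
    unfolding p by (rule norm_triangle_ineq)
  ultimately show ?thesis
    by linarith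
qed

lemma power_le_powr:
  fixes r x :: real
  assumes "0 \<le> r" "r \<le> 1" "0 < x" "x \<le> real j"
  shows "r ^ j \<le> r powr x"
proof (cases "r = 0")
  case True
  then show ?thesis
    using assms(3,4) by (simp add: zero_power)
next
  case False
  then show ?thesis
    using assms by (simp add: powr_realpow[symmetric] powr_mono')
qed

lemma Pn_norm_poly_real_ge:
  assumes "p \<in> Pn n" "n \<ge> 1" "0 \<le> r" "r \<le> 1"
  shows "1 - r - (real n + 1) * r powr (real n powr (1/5)) \<le> norm (poly p (of_real r))"
proof -
  let ?S = "{j. real n powr (1/5) \<le> real j \<and> j \<le> n}"
  obtain d \<sigma> c where d: "1 \<le> d" and \<sigma>: "\<sigma> \<in> {0, 1}" and c: "\<And>j. norm (c j) \<le> 1"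
    and p: "\<And>x. poly p x = 1 - of_nat \<sigma> * x ^ d + (\<Sum>j\<in>?S. c j * x ^ j)"
    using assms(1) by (rule PnE) (rule that)
  have "r ^ d \<le> r ^ 1"
    using d assms(3,4) by (rule power_decreasing)
  then have low: "1 - r \<le> 1 - of_nat \<sigma> * r ^ d"
    using \<sigma> assms(3) by auto
  have r_pow: "r ^ j \<le> r powr (real n powr (1/5))" if "j \<in> ?S" for j
    using that assms by (intro power_le_powr) auto
  have "norm (\<Sum>j\<in>?S. c j * of_real r ^ j) \<le> (\<Sum>j\<in>?S. r powr (real n powr (1/5)))"
  proof (rule sum_norm_le)
    fix j assume "j \<in> ?S"
    then show "norm (c j * of_real r ^ j) \<le> r powr (real n powr (1/5))"
      using c[of j] r_pow[of j] assms(3) mult_right_mono[of "norm (c j)" 1 "r ^ j"]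
      by (simp add: norm_mult norm_power)
  qed
  also have "\<dots> \<le> (real n + 1) * r powr (real n powr (1/5))"
    using card_Pn_exponents_le[of n] by (simp add: mult_right_mono)
  finally have high: "norm (\<Sum>j\<in>?S. c j * of_real r ^ j) \<le> (real n + 1) * r powr (real n powr (1/5))" .
  have "poly p (of_real r) = of_real (1 - of_nat \<sigma> * r ^ d) + (\<Sum>j\<in>?S. c j * of_real r ^ j)"
    unfolding p by simp
  moreover have "1 - r \<le> norm (of_real (1 - of_nat \<sigma> * r ^ d) :: complex)"
    using low unfolding norm_of_real by linarith
  ultimately show ?thesis
    using high norm_diff_ineq[of "of_real (1 - of_nat \<sigma> * r ^ d) :: complex" "\<Sum>j\<in>?S. c j * of_real r ^ j"]
    by (simp only:)
qed

section \<open>Choice of parameters\<close>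

definition radius_gap :: "nat \<Rightarrow> real" where
  "radius_gap n = min 1 (3 * ln (real n) / real n powr (1/5))"

definition rotation_count :: "nat \<Rightarrow> nat" where
  "rotation_count n = nat \<lceil>3 * pi * radius_gap n * real n powr (2/5)\<rceil>"

lemma ln_ge_two_thirds:
  assumes "2 \<le> n"
  shows "2/3 \<le> ln (real n)"
proof -
  have "ln 2 \<le> ln (real n)"
    using assms by (subst ln_le_cancel_iff) auto
  then show ?thesis
    using ln2_ge_two_thirds by linarith
qed

lemma fifth_root_bounds:
  assumes "2 \<le> n"
  shows "1 \<le> real n powr (1/5)" "real n powr (1/5) \<le> real n"
    "(real n powr (1/5))\<^sup>2 = real n powr (2/5)"
proof -
  show "1 \<le> real n powr (1/5)"
    using assms by (intro ge_one_powr_ge_zero) auto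
  show "real n powr (1/5) \<le> real n"
    using powr_mono[of "1/5" 1 "real n"] assms by simp
  show "(real n powr (1/5))\<^sup>2 = real n powr (2/5)"
    by (simp add: powr_powr flip: powr_numeral)
qed

lemma radius_gap_bounds:
  assumes "2 \<le> n"
  shows "1 / real n powr (1/5) \<le> radius_gap n" "0 < radius_gap n" "radius_gap n \<le> 1"
proof -
  have "1 \<le> 3 * ln (real n)"
    using ln_ge_two_thirds[OF assms] by simp
  then have "1 / real n powr (1/5) \<le> 3 * ln (real n) / real n powr (1/5)"
    by (simp add: divide_right_mono)
  moreover have "1 / real n powr (1/5) \<le> 1"
    using fifth_root_bounds(1)[OF assms] by (auto simp: divide_le_eq_1)
  ultimately show "1 / real n powr (1/5) \<le> radius_gap n"
    unfolding radius_gap_def by simp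
  moreover have "0 < 1 / real n powr (1/5)"
    using assms by simp
  ultimately show "0 < radius_gap n"
    by linarith
qed (simp add: radius_gap_def)

lemma arc_width_le_radius_gap:
  assumes "2 \<le> n"
  shows "real n powr (-2/5) \<le> radius_gap n"
proof -
  have "real n powr (-2/5) \<le> real n powr (-(1/5))"
    using assms by (intro powr_mono) auto
  then show ?thesis
    using radius_gap_bounds(1)[OF assms] by (simp add: powr_minus_divide)
qed

lemma radius_gap_tail:
  assumes "2 \<le> n"
  shows "(real n + 1) * (1 - radius_gap n) powr (real n powr (1/5)) \<le> radius_gap n / 2"
proof (cases "radius_gap n = 1")
  \<comment> \<open>If the gap is 1, the left-hand side is 0 since 0 powr x = 0.\<close>
  case False
  define m L \<epsilon> where "m = real n powr (1/5)" and "L = ln (real n)" and "\<epsilon> = radius_gap n"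
  have m: "1 \<le> m" "m \<le> real n" and L: "2/3 \<le> L"
    using fifth_root_bounds[OF assms] ln_ge_two_thirds[OF assms] unfolding m_def L_def by auto
  have \<epsilon>: "\<epsilon> = 3 * L / m" "\<epsilon> < 1"
    using False radius_gap_bounds(3)[OF assms] unfolding \<epsilon>_def radius_gap_def m_def L_def
    by (auto simp: min_def split: if_splits)
  have "(1 - \<epsilon>) powr m \<le> exp (- \<epsilon>) powr m"
    using \<epsilon>(2) m exp_ge_add_one_self[of "- \<epsilon>"] by (intro powr_mono2) auto
  also have "\<dots> = exp (- (3 * L))"
    using m by (simp add: exp_powr_real \<epsilon>(1))
  also have "\<dots> = 1 / real n ^ 3"
  proof -
    have "3 * L = ln (real n ^ 3)"
      unfolding L_def by (simp add: ln_realpow)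
    then show ?thesis
      using assms by (simp add: exp_minus inverse_eq_divide)
  qed
  finally have "(real n + 1) * (1 - \<epsilon>) powr m \<le> (real n + 1) / real n ^ 3"
    by (simp add: mult_left_mono divide_inverse)
  also have "\<dots> \<le> 3 / (4 * real n)"
  proof -
    have "0 \<le> (3 * real n + 2) * (real n - 2)"
      using assms by (intro mult_nonneg_nonneg) auto
    then have "4 * (real n + 1) \<le> 3 * real n * real n"
      by (simp add: algebra_simps)
    then have "4 * (real n + 1) * real n \<le> 3 * real n * real n * real n"
      by (intro mult_right_mono) auto
    then show ?thesis
      using assms by (simp add: divide_simps power3_eq_cube mult_ac)
  qed
  also have "\<dots> \<le> 3 / (4 * m)"
    using m by (intro divide_left_mono) auto
  also have "\<dots> \<le> \<epsilon> / 2"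
    using m L unfolding \<epsilon>(1) by (simp add: field_simps)
  finally show ?thesis
    unfolding \<epsilon>_def m_def .
qed simp

lemma radius_gap_ratio_le:
  assumes "2 \<le> n"
  shows "2 * (real n + 3) / radius_gap n \<le> real n ^ 5"
proof -
  have "1 \<le> radius_gap n * real n powr (1/5)"
    using radius_gap_bounds(1)[OF assms] fifth_root_bounds(1)[OF assms] assms
    by (simp add: divide_le_eq mult.commute)
  then have "2 * (real n + 3) * 1 \<le> 2 * (real n + 3) * (radius_gap n * real n powr (1/5))"
    by (intro mult_left_mono) auto
  then have "2 * (real n + 3) / radius_gap n \<le> 2 * (real n + 3) * real n powr (1/5)"
    using radius_gap_bounds(2)[OF assms] by (simp add: pos_divide_le_eq mult_ac)
  also have "\<dots> \<le> 2 * (real n + 3) * real n"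
    using fifth_root_bounds(2)[OF assms] by (intro mult_left_mono) auto
  also have "\<dots> \<le> 8 * real n * real n"
    using assms by (intro mult_right_mono) auto
  also have "\<dots> \<le> real n ^ 3 * real n * real n"
    using assms power_mono[of 2 "real n" 3] by (intro mult_right_mono) auto
  also have "\<dots> = real n ^ 5"
    by (simp add: eval_nat_numeral)
  finally show ?thesis .
qed

lemma rotation_count_ge:
  assumes "2 \<le> n"
  shows "1 \<le> rotation_count n" "3 * pi * radius_gap n \<le> rotation_count n * real n powr (-2/5)"
proof -
  have pos: "0 < 3 * pi * radius_gap n * real n powr (2/5)"
    using radius_gap_bounds(2)[OF assms] assms by simp
  have N: "3 * pi * radius_gap n * real n powr (2/5) \<le> rotation_count n"
    unfolding rotation_count_def by (rule real_nat_ceiling_ge)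
  then show "1 \<le> rotation_count n"
    using pos by linarith
  have "real n powr (2/5) * real n powr (-2/5) = 1"
    using assms by (simp flip: powr_add)
  then show "3 * pi * radius_gap n \<le> rotation_count n * real n powr (-2/5)"
    using mult_right_mono[OF N, of "real n powr (-2/5)"] by (simp add: mult.assoc)
qed

lemma rotation_count_le:
  assumes "2 \<le> n"
  shows "real (rotation_count n) \<le> 40 * ln (real n) * real n powr (1/5)"
proof -
  define m L where "m = real n powr (1/5)" and "L = ln (real n)"
  have m: "1 \<le> m" "m\<^sup>2 = real n powr (2/5)" and L: "2/3 \<le> L"
    using fifth_root_bounds[OF assms] ln_ge_two_thirds[OF assms] unfolding m_def L_def by auto
  have "radius_gap n \<le> 3 * L / m"
    unfolding radius_gap_def m_def L_def by simp
  then have "3 * pi * radius_gap n * m\<^sup>2 \<le> 3 * pi * (3 * L / m) * m\<^sup>2"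
    by (intro mult_right_mono mult_left_mono) auto
  also have "\<dots> = 9 * pi * (L * m)"
    using m(1) by (simp add: power2_eq_square)
  also have "\<dots> \<le> 36 * (L * m)"
    using m L pi_less_4 by (intro mult_right_mono) auto
  finally have "3 * pi * radius_gap n * m\<^sup>2 \<le> 36 * (L * m)" .
  moreover have "real (rotation_count n) \<le> 3 * pi * radius_gap n * m\<^sup>2 + 1"
  proof -
    have "0 \<le> radius_gap n"
      using radius_gap_bounds(2)[OF assms] by simp
    then show ?thesis
      using ceiling_correct[of "3 * pi * radius_gap n * m\<^sup>2"]
      unfolding rotation_count_def m(2) by (simp add: of_nat_nat)
  qed
  moreover have "1 \<le> 2 * (L * m)"
    using m L mult_mono[of "2/3" L 1 m] by simp
  ultimately show ?thesis
    unfolding m_def L_def by linarith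
qed

lemma rotation_count_power_ge:
  assumes "2 \<le> n"
  shows "exp (- 2000 * real n powr (1/5) * ln (real n) ^ 5)
    \<le> (radius_gap n / (2 * (real n + 3))) ^ rotation_count n"
proof -
  define m L N Q where "m = real n powr (1/5)" and "L = ln (real n)" and "N = rotation_count n"
    and "Q = 2 * (real n + 3) / radius_gap n"
  have m: "1 \<le> m" and L: "2/3 \<le> L"
    using fifth_root_bounds[OF assms] ln_ge_two_thirds[OF assms] unfolding m_def L_def by auto
  have Q: "1 \<le> Q"
    unfolding Q_def using radius_gap_bounds(2,3)[OF assms] by (simp add: field_simps)
  then have "ln Q \<le> ln (real n ^ 5)"
    using radius_gap_ratio_le[OF assms] assms unfolding Q_def by (subst ln_le_cancel_iff) auto
  then have "ln Q \<le> 5 * L"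
    unfolding L_def by (simp add: ln_realpow)
  then have "real N * ln Q \<le> (40 * L * m) * (5 * L)"
    using rotation_count_le[OF assms] Q L m unfolding N_def L_def m_def
    by (intro mult_mono) auto
  also have "\<dots> \<le> 2000 * m * L ^ 5"
  proof -
    have "(2/3) ^ 3 \<le> L ^ 3"
      using L by (intro power_mono) auto
    then have "1 \<le> 10 * L ^ 3"
      by (simp add: power_divide)
    then have "200 * m * L\<^sup>2 * 1 \<le> 200 * m * L\<^sup>2 * (10 * L ^ 3)"
      using m by (intro mult_left_mono) auto
    then show ?thesis
      by (simp add: eval_nat_numeral algebra_simps)
  qed
  finally have "exp (- 2000 * m * L ^ 5) \<le> exp (- (real N * ln Q))"
    by simp
  also have "\<dots> = (1 / Q) ^ N"
    using Q by (simp add: exp_minus exp_of_nat_mult power_one_over inverse_eq_divide)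
  also have "\<dots> = (radius_gap n / (2 * (real n + 3))) ^ N"
    unfolding Q_def by simp
  finally show ?thesis
    unfolding m_def L_def N_def .
qed

theorem theorem3:
  shows "\<exists>C::real. C > 0 \<and> (\<forall>n::nat. n \<ge> 2 \<longrightarrow> (\<forall>p\<in>Pn n.
     (\<exists>\<theta>::real. \<bar>\<theta>\<bar> \<le> real n powr (-2/5) \<and>
        cmod (poly p (exp (\<i> * of_real \<theta>))) \<ge> exp (- C * real n powr (1/5) * (ln (real n)) ^ 5))))"
proof (rule exI[of _ 2000], intro conjI allI impI ballI)
  fix n :: nat and p assume n: "n \<ge> 2" and p: "p \<in> Pn n"
  define \<epsilon> N where "\<epsilon> = radius_gap n" and "N = rotation_count n"
  obtain \<theta> where \<theta>: "\<bar>\<theta>\<bar> \<le> real n powr (-2/5)"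
    and lower: "(norm (poly p (of_real (1 - \<epsilon>))) / (real n + 3)) ^ N \<le> norm (poly p (exp (\<i> * of_real \<theta>)))"
    using norm_poly_arc_lower_bound[of p "real n + 3" "real n powr (-2/5)" \<epsilon> N]
      Pn_norm_poly_le[OF p] arc_width_le_radius_gap[OF n] radius_gap_bounds[OF n]
      rotation_count_ge[OF n] n unfolding \<epsilon>_def N_def by auto
  have "\<epsilon> / 2 \<le> norm (poly p (of_real (1 - \<epsilon>)))"
    using Pn_norm_poly_real_ge[OF p, of "1 - \<epsilon>"] radius_gap_tail[OF n] radius_gap_bounds[OF n] n
    unfolding \<epsilon>_def by auto
  then have "(\<epsilon> / (2 * (real n + 3))) ^ N \<le> (norm (poly p (of_real (1 - \<epsilon>))) / (real n + 3)) ^ N"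
    using radius_gap_bounds(2)[OF n] unfolding \<epsilon>_def
    by (subst divide_divide_eq_left[symmetric]) (intro power_mono divide_right_mono; simp)
  then show "\<exists>\<theta>. \<bar>\<theta>\<bar> \<le> real n powr (-2/5) \<and>
      exp (- 2000 * real n powr (1/5) * ln (real n) ^ 5) \<le> norm (poly p (exp (\<i> * of_real \<theta>)))"
    using rotation_count_power_ge[OF n] \<theta> lower unfolding \<epsilon>_def N_def by (meson order_trans)
qed simp

end
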